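(* If there exists an unbounded function $f:\mathbb{N}\to\mathbb{R}$ such that $\prod_{i=k}^{k+n}s_i\ge f(n)$ for all $n\in\mathbb{N}$ and all $k\ge2$, then $\mathcal{S}$-DC is not competitive for the infinite server problem on the half-line $[0,\infty)$ with source $0$. In particular, if $\liminf_{i\to\infty}s_i>1$, then $\mathcal{S}$-DC is not competitive.
   Context: Infinite server problem on the half-line $[0,\infty)$ with source $0$: an unbounded number of servers initially reside at $0$; requests are revealed one by one and must be served immediately, without knowledge of future requests, by moving a server to the request; the cost is the total distance traveled. Let $\mathcal{S}=\{s_i\ge1 : i\ge2\}$ be given by a monotonic (non-decreasing or non-increasing) sequence of speeds $s_i\ge1$. Denote by $x_i$ the $i$-th server from the right. Algorithm $\mathcal{S}$-DC: if a request lies between servers $x_{i+1}$ (to its left) and $x_i$ (to its right), move them towards it with speeds $s_{i+1}$ and $1$ respectively until one of them reaches it; if no server is to the right of the request, move the rightmost server to the request. An online algorithm is competitive if there are $\rho,c$ with $ALG(\sigma)\le\rho\,OPT(\sigma)+c$ for all request sequences $\sigma$. *)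

theory Defs
  imports Complex_Main "HOL-Library.Extended_Real" "HOL-Library.Liminf_Limsup"
begin

text \<open>Configurations of the online algorithm: x i (for i \<ge> 1) is the position of the
 i-th server from the right; all servers start at the source 0 (x = (\<lambda>_. 0)).
 Index 0 is unused. Speeds s i are meaningful for i \<ge> 2.\<close>

definition dc_step :: "(nat \<Rightarrow> real) \<Rightarrow> (nat \<Rightarrow> real) \<Rightarrow> real \<Rightarrow> (nat \<Rightarrow> real) \<times> real" where
  "dc_step s x r =
     (if x 1 \<le> r then (x(1 := r), r - x 1)
      else (let i = (LEAST i. x (Suc i) \<le> r);
                t = min ((r - x (Suc i)) / s (Suc i)) (x i - r)
            in (x(i := x i - t, Suc i := x (Suc i) + s (Suc i) * t), t + s (Suc i) * t)))"

fun dc_run :: "(nat \<Rightarrow> real) \<Rightarrow> (nat \<Rightarrow> real) \<Rightarrow> real list \<Rightarrow> real" where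
  "dc_run s x [] = 0"
| "dc_run s x (r # rs) = snd (dc_step s x r) + dc_run s (fst (dc_step s x r)) rs"

definition ALG_DC :: "(nat \<Rightarrow> real) \<Rightarrow> real list \<Rightarrow> real" where
  "ALG_DC s \<sigma> = dc_run s (\<lambda>_. 0) \<sigma>"

text \<open>Offline schedules: countably many servers indexed by nat, cs j k = position of server k
 after serving the first j requests; all on the half-line, all starting at 0.\<close>

definition feasible_schedule :: "real list \<Rightarrow> (nat \<Rightarrow> nat \<Rightarrow> real) \<Rightarrow> bool" where
  "feasible_schedule \<sigma> cs \<longleftrightarrow>
     cs 0 = (\<lambda>_. 0) \<and>
     (\<forall>j\<le>length \<sigma>. \<forall>k. 0 \<le> cs j k) \<and>
     (\<forall>j<length \<sigma>. (\<exists>k. cs (Suc j) k = \<sigma> ! j) \<and> summable (\<lambda>k. \<bar>cs (Suc j) k - cs j k\<bar>))"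

definition schedule_cost :: "real list \<Rightarrow> (nat \<Rightarrow> nat \<Rightarrow> real) \<Rightarrow> real" where
  "schedule_cost \<sigma> cs = (\<Sum>j<length \<sigma>. (\<Sum>k. \<bar>cs (Suc j) k - cs j k\<bar>))"

definition OPT :: "real list \<Rightarrow> real" where
  "OPT \<sigma> = Inf {schedule_cost \<sigma> cs | cs. feasible_schedule \<sigma> cs}"

definition DC_competitive :: "(nat \<Rightarrow> real) \<Rightarrow> bool" where
  "DC_competitive s \<longleftrightarrow>
     (\<exists>\<rho> c. \<forall>\<sigma>. (\<forall>r\<in>set \<sigma>. 0 \<le> r) \<longrightarrow> ALG_DC s \<sigma> \<le> \<rho> * OPT \<sigma> + c)"

end

theory Submission
  imports Defs "HOL-Real_Asymp.Real_Asymp"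
begin

text \<open>
  An adversary places requests on the levels \<open>1 - j\<delta>\<close>. In phase \<open>p\<close> the servers
  of a window of at most \<open>L\<close> consecutive indices ending at \<open>p\<close> sit on their levels. A round
  requests a point slightly to the right of the leftmost window server, which pulls it up, and
  then re-requests the window levels from left to right: each request pushes its server back
  down and the next server up, the displacement growing by the speed factor at every step.
  After \<open>R\<close> rounds server \<open>p + 1\<close> has climbed to its own level and the next phase begins.
  Since the speeds multiply to a large gain along the window, the nudges can be tiny, so the
  server just left of the window hardly moves. After \<open>P\<close> phases DC has moved \<open>P + 1\<close>
  servers above \<open>1/2\<close>, whereas serving level \<open>j\<close> always by server \<open>j mod L\<close> and all
  nudges by one extra server costs at most \<open>2 (L + 1)\<close>. Speeds eventually bounded below
  by some \<open>c > 1\<close> give windows whose gain grows exponentially in \<open>L\<close>, so \<open>P\<close> can be taken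
  much larger than \<open>L\<close>, contradicting competitiveness.
\<close>

lemma sum_le_single:
  fixes f :: "'a \<Rightarrow> 'b :: ordered_comm_monoid_add"
  assumes "finite F" and "0 \<le> f a" and "\<And>k. k \<noteq> a \<Longrightarrow> f k \<le> 0"
  shows "sum f F \<le> f a"
proof -
  have "sum f F \<le> (\<Sum>k\<in>F. if k = a then f a else 0)"
    by (rule sum_mono) (use assms(3) in auto)
  also have "\<dots> \<le> f a" using assms(1,2) by (simp add: sum.delta)
  finally show ?thesis .
qed

lemma mod_inj_on_short_interval:
  fixes j j' :: nat
  assumes "j mod L = j' mod L" "a \<le> j" "a \<le> j'" "j < a + L" "j' < a + L"
  shows "j = j'"
proof -
  have le: "u = v" if "u \<le> v" "u mod L = v mod L" "a \<le> u" "v < a + L" for u v :: nat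
  proof -
    have "L dvd v - u" using mod_eq_dvd_iff_nat[OF that(1)] that(2)[symmetric] by simp
    moreover have "v - u < L" using that(1,3,4) by linarith
    ultimately have "v - u = 0" by (metis dvd_imp_le not_less zero_less_iff_neq_zero)
    then show ?thesis using that(1) by simp
  qed
  show ?thesis
    using le[of j j'] le[of j' j] assms by (cases "j \<le> j'") auto
qed

lemma sorted_wrt_all_pairs:
  "(\<And>u v. u \<in> set xs \<Longrightarrow> v \<in> set xs \<Longrightarrow> Q u v) \<Longrightarrow> sorted_wrt Q xs"
  by (induction xs) auto

lemma sorted_wrt_concat_map:
  "(\<And>x. x \<in> set xs \<Longrightarrow> sorted_wrt Q (F x)) \<Longrightarrow>
   sorted_wrt (\<lambda>x y. \<forall>u\<in>set (F x). \<forall>v\<in>set (F y). Q u v) xs \<Longrightarrow>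
   sorted_wrt Q (concat (map F xs))"
  by (induction xs) (auto simp: sorted_wrt_append)

section \<open>Double coverage as a state machine\<close>

fun dc_config :: "(nat \<Rightarrow> real) \<Rightarrow> (nat \<Rightarrow> real) \<Rightarrow> real list \<Rightarrow> nat \<Rightarrow> real" where
  "dc_config s x [] = x"
| "dc_config s x (r # rs) = dc_config s (fst (dc_step s x r)) rs"

lemma dc_config_append: "dc_config s x (xs @ ys) = dc_config s (dc_config s x xs) ys"
  by (induction xs arbitrary: x) auto

lemma dc_step_right: "x 1 \<le> r \<Longrightarrow> dc_step s x r = (x(1 := r), r - x 1)"
  by (simp add: dc_step_def)

lemma dc_step_between:
  fixes s :: "nat \<Rightarrow> real"
  assumes "1 \<le> i" and "x (Suc i) \<le> r" and "\<And>k. 1 \<le> k \<Longrightarrow> k \<le> i \<Longrightarrow> r < x k"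
  defines "t \<equiv> min ((r - x (Suc i)) / s (Suc i)) (x i - r)"
  shows "dc_step s x r = (x(i := x i - t, Suc i := x (Suc i) + s (Suc i) * t), t + s (Suc i) * t)"
proof -
  have "(LEAST i. x (Suc i) \<le> r) = i"
  proof (rule Least_equality)
    fix y assume "x (Suc y) \<le> r"
    then show "i \<le> y" using assms(3)[of "Suc y"] by fastforce
  qed fact
  moreover have "\<not> x 1 \<le> r" using assms(1) assms(3)[of 1] by auto
  ultimately show ?thesis unfolding dc_step_def t_def Let_def by simp
qed

lemma dc_step_cases:
  assumes speeds: "\<And>i. 2 \<le> i \<Longrightarrow> 1 \<le> s i" and "0 \<le> r" and "finite {k. x k \<noteq> 0}"
  obtains "x 1 \<le> r" and "dc_step s x r = (x(1 := r), r - x 1)"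
  | i t where "1 \<le> i" and "0 \<le> t"
    and "dc_step s x r = (x(i := x i - t, Suc i := x (Suc i) + s (Suc i) * t), t + s (Suc i) * t)"
proof (cases "x 1 \<le> r")
  case True
  then show ?thesis using that(1) dc_step_right by blast
next
  case False
  obtain n where "\<forall>k\<in>{k. x k \<noteq> 0}. k \<le> n"
    using assms(3) finite_nat_set_iff_bounded_le by blast
  then have "Suc n \<notin> {k. x k \<noteq> 0}" by auto
  then have "x (Suc n) = 0" by simp
  then have ex: "x (Suc n) \<le> r" using \<open>0 \<le> r\<close> by simp
  define i where "i = (LEAST i. x (Suc i) \<le> r)"
  have i: "x (Suc i) \<le> r" unfolding i_def using ex by (rule LeastI)
  have left: "r < x k" if "1 \<le> k" "k \<le> i" for k
  proof (cases k)
    case (Suc k')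
    then have "\<not> x (Suc k') \<le> r" using that not_less_Least[of k' "\<lambda>i. x (Suc i) \<le> r"] i_def by simp
    then show ?thesis using Suc by simp
  qed (use that in simp)
  have "1 \<le> i" using i False by (cases i) auto
  moreover have "0 \<le> min ((r - x (Suc i)) / s (Suc i)) (x i - r)"
    using i left[OF \<open>1 \<le> i\<close>] speeds[of "Suc i"] \<open>1 \<le> i\<close> by simp
  ultimately show ?thesis using that(2) dc_step_between[of i x r s] i left by blast
qed

lemma dc_step_finite_support:
  "finite {k. x k \<noteq> 0} \<Longrightarrow> finite {k. fst (dc_step s x r) k \<noteq> 0}"
  unfolding dc_step_def Let_def
  by (auto intro: finite_subset[of _ "insert _ (insert _ {k. x k \<noteq> 0})"])

lemma dc_step_displacement_le_cost:
  assumes speeds: "\<And>i. 2 \<le> i \<Longrightarrow> 1 \<le> s i" and "0 \<le> r" and "finite {k. x k \<noteq> 0}"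
    and "finite F"
  shows "(\<Sum>k\<in>F. fst (dc_step s x r) k - x k) \<le> snd (dc_step s x r)"
proof (rule dc_step_cases[OF speeds assms(2,3)])
  assume "x 1 \<le> r" and "dc_step s x r = (x(1 := r), r - x 1)"
  then show ?thesis using sum_le_single[OF \<open>finite F\<close>, of "\<lambda>k. (x(1 := r)) k - x k" 1] by simp
next
  fix i t
  assume "1 \<le> i" "0 \<le> t"
    and step: "dc_step s x r = (x(i := x i - t, Suc i := x (Suc i) + s (Suc i) * t), t + s (Suc i) * t)"
  have "1 \<le> s (Suc i)" using speeds \<open>1 \<le> i\<close> by simp
  then have "(\<Sum>k\<in>F. fst (dc_step s x r) k - x k) \<le> s (Suc i) * t"
    using sum_le_single[OF \<open>finite F\<close>, of "\<lambda>k. fst (dc_step s x r) k - x k" "Suc i"] step \<open>0 \<le> t\<close> by simp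
  then show ?thesis using step \<open>0 \<le> t\<close> by simp
qed

lemma dc_run_ge_displacement:
  assumes speeds: "\<And>i. 2 \<le> i \<Longrightarrow> 1 \<le> s i" and "finite F"
  shows "\<forall>r\<in>set \<sigma>. 0 \<le> r \<Longrightarrow> finite {k. x k \<noteq> 0} \<Longrightarrow>
    (\<Sum>k\<in>F. dc_config s x \<sigma> k - x k) \<le> dc_run s x \<sigma>"
proof (induction \<sigma> arbitrary: x)
  case (Cons r rs)
  let ?y = "fst (dc_step s x r)"
  have "(\<Sum>k\<in>F. dc_config s x (r # rs) k - x k)
      = (\<Sum>k\<in>F. dc_config s ?y rs k - ?y k) + (\<Sum>k\<in>F. ?y k - x k)"
    by (simp add: sum.distrib[symmetric])
  also have "\<dots> \<le> dc_run s ?y rs + snd (dc_step s x r)"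
    using Cons dc_step_finite_support dc_step_displacement_le_cost[OF speeds _ _ \<open>finite F\<close>]
    by (intro add_mono) auto
  finally show ?case by simp
qed simp

section \<open>Offline schedules that assign servers by request\<close>

fun assignment_schedule :: "(real \<Rightarrow> nat) \<Rightarrow> real list \<Rightarrow> nat \<Rightarrow> nat \<Rightarrow> real" where
  "assignment_schedule g \<sigma> 0 = (\<lambda>_. 0)"
| "assignment_schedule g \<sigma> (Suc j) = (assignment_schedule g \<sigma> j)(g (\<sigma> ! j) := \<sigma> ! j)"

lemma assignment_schedule_cases:
  "assignment_schedule g \<sigma> j k = 0 \<or>
   (\<exists>j'<j. g (\<sigma> ! j') = k \<and> assignment_schedule g \<sigma> j k = \<sigma> ! j')"
  by (induction j) (auto intro: less_SucI)

lemma assignment_schedule_nonneg: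
  "\<forall>r\<in>set \<sigma>. 0 \<le> r \<Longrightarrow> j \<le> length \<sigma> \<Longrightarrow> 0 \<le> assignment_schedule g \<sigma> j k"
  using assignment_schedule_cases[of g \<sigma> j k] by (auto dest: order.strict_trans2)

lemma assignment_schedule_step_sums:
  "(\<lambda>k. \<bar>assignment_schedule g \<sigma> (Suc j) k - assignment_schedule g \<sigma> j k\<bar>)
     sums \<bar>\<sigma> ! j - assignment_schedule g \<sigma> j (g (\<sigma> ! j))\<bar>"
proof -
  have "(\<lambda>k. \<bar>assignment_schedule g \<sigma> (Suc j) k - assignment_schedule g \<sigma> j k\<bar>)
      = (\<lambda>k. if k = g (\<sigma> ! j) then \<bar>\<sigma> ! j - assignment_schedule g \<sigma> j (g (\<sigma> ! j))\<bar> else 0)"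
    by auto
  then show ?thesis using sums_single[of "g (\<sigma> ! j)"] by simp
qed

lemma assignment_schedule_feasible:
  assumes "\<forall>r\<in>set \<sigma>. 0 \<le> r"
  shows "feasible_schedule \<sigma> (assignment_schedule g \<sigma>)"
  unfolding feasible_schedule_def
proof (intro conjI allI impI)
  fix j assume "j < length \<sigma>"
  show "\<exists>k. assignment_schedule g \<sigma> (Suc j) k = \<sigma> ! j" by (rule exI[of _ "g (\<sigma> ! j)"]) simp
  show "summable (\<lambda>k. \<bar>assignment_schedule g \<sigma> (Suc j) k - assignment_schedule g \<sigma> j k\<bar>)"
    using assignment_schedule_step_sums by (rule sums_summable)
qed (use assms assignment_schedule_nonneg in auto)

lemma assignment_schedule_cost:
  "schedule_cost \<sigma> (assignment_schedule g \<sigma>)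
     = (\<Sum>j<length \<sigma>. \<bar>\<sigma> ! j - assignment_schedule g \<sigma> j (g (\<sigma> ! j))\<bar>)"
  unfolding schedule_cost_def using assignment_schedule_step_sums by (simp add: sums_iff)

lemma schedule_cost_nonneg: "feasible_schedule \<sigma> cs \<Longrightarrow> 0 \<le> schedule_cost \<sigma> cs"
  unfolding feasible_schedule_def schedule_cost_def by (auto intro!: sum_nonneg suminf_nonneg)

lemma OPT_nonneg: "\<forall>r\<in>set \<sigma>. 0 \<le> r \<Longrightarrow> 0 \<le> OPT \<sigma>"
  unfolding OPT_def
  by (rule cInf_greatest) (use assignment_schedule_feasible schedule_cost_nonneg in auto)

lemma OPT_le_schedule_cost: "feasible_schedule \<sigma> cs \<Longrightarrow> OPT \<sigma> \<le> schedule_cost \<sigma> cs"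
  unfolding OPT_def
  by (rule cInf_lower) (auto intro: bdd_belowI[of _ 0] schedule_cost_nonneg)

text \<open>When every server serves a
  non-increasing sequence of requests in \<open>(0, M]\<close>, each service cost is paid by the drop of
  this potential.\<close>

definition assignment_potential :: "(real \<Rightarrow> nat) \<Rightarrow> real list \<Rightarrow> real \<Rightarrow> nat \<Rightarrow> nat \<Rightarrow> real" where
  "assignment_potential g \<sigma> M K j =
     (\<Sum>k<K. if assignment_schedule g \<sigma> j k = 0 then 2 * M else assignment_schedule g \<sigma> j k)"

lemma assignment_step_cost_le_potential_drop:
  assumes M: "\<forall>r\<in>set \<sigma>. 0 < r \<and> r \<le> M" and K: "\<forall>r\<in>set \<sigma>. g r < K"
    and order: "sorted_wrt (\<lambda>u v. g u = g v \<longrightarrow> v \<le> u) \<sigma>" and j: "j < length \<sigma>"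
  shows "\<bar>\<sigma> ! j - assignment_schedule g \<sigma> j (g (\<sigma> ! j))\<bar>
    \<le> assignment_potential g \<sigma> M K j - assignment_potential g \<sigma> M K (Suc j)"
proof -
  let ?x = "assignment_schedule g \<sigma>" and ?v = "\<sigma> ! j"
  define T where "T i k = (if ?x i k = 0 then 2 * M else ?x i k)" for i k
  have v: "0 < ?v" "?v \<le> M" "g ?v < K" using M K j nth_mem by auto
  have "assignment_potential g \<sigma> M K j - assignment_potential g \<sigma> M K (Suc j)
      = (\<Sum>k<K. T j k - T (Suc j) k)"
    unfolding assignment_potential_def T_def by (simp add: sum_subtractf)
  also have "\<dots> = (\<Sum>k<K. if k = g ?v then T j (g ?v) - ?v else 0)"
    by (rule sum.cong) (use v in \<open>auto simp: T_def\<close>)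
  also have "\<dots> = T j (g ?v) - ?v" using v by simp
  finally have drop: "assignment_potential g \<sigma> M K j - assignment_potential g \<sigma> M K (Suc j)
      = T j (g ?v) - ?v" .
  from assignment_schedule_cases[of g \<sigma> j "g ?v"] show ?thesis
  proof
    assume "?x j (g ?v) = 0"
    then show ?thesis using drop v by (simp add: T_def)
  next
    assume "\<exists>j'<j. g (\<sigma> ! j') = g ?v \<and> ?x j (g ?v) = \<sigma> ! j'"
    then obtain j' where j': "j' < j" "g (\<sigma> ! j') = g ?v" "?x j (g ?v) = \<sigma> ! j'" by blast
    have "?v \<le> \<sigma> ! j'" using sorted_wrt_nth_less[OF order j'(1) j] j'(2) by simp
    moreover have "0 < \<sigma> ! j'" using M j'(1) j by simp
    ultimately show ?thesis using drop j'(3) by (simp add: T_def)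
  qed
qed

lemma OPT_le_assignment:
  assumes "0 \<le> M" and M: "\<forall>r\<in>set \<sigma>. 0 < r \<and> r \<le> M" and K: "\<forall>r\<in>set \<sigma>. g r < K"
    and order: "sorted_wrt (\<lambda>u v. g u = g v \<longrightarrow> v \<le> u) \<sigma>"
  shows "OPT \<sigma> \<le> 2 * M * real K"
proof -
  let ?\<Phi> = "assignment_potential g \<sigma> M K"
  have telescope: "(\<Sum>j<n. \<bar>\<sigma> ! j - assignment_schedule g \<sigma> j (g (\<sigma> ! j))\<bar>) \<le> ?\<Phi> 0 - ?\<Phi> n"
    if "n \<le> length \<sigma>" for n
    using that
  proof (induction n)
    case (Suc n)
    then show ?case using assignment_step_cost_le_potential_drop[OF M K order, of n] by simp
  qed simp
  have nonneg: "\<forall>r\<in>set \<sigma>. 0 \<le> r" using M by auto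
  have "OPT \<sigma> \<le> (\<Sum>j<length \<sigma>. \<bar>\<sigma> ! j - assignment_schedule g \<sigma> j (g (\<sigma> ! j))\<bar>)"
    using OPT_le_schedule_cost[OF assignment_schedule_feasible[OF nonneg]]
    by (simp add: assignment_schedule_cost)
  moreover have "?\<Phi> 0 = 2 * M * real K" by (simp add: assignment_potential_def)
  moreover have "0 \<le> ?\<Phi> (length \<sigma>)"
    unfolding assignment_potential_def
    using assignment_schedule_nonneg[OF nonneg] \<open>0 \<le> M\<close> by (auto intro!: sum_nonneg)
  ultimately show ?thesis using telescope[of "length \<sigma>"] by linarith
qed

section \<open>The adversarial request sequence\<close>

locale dc_adversary =
  fixes s :: "nat \<Rightarrow> real" and L :: nat and \<delta> :: real and R :: nat
  assumes speeds: "\<And>i. 2 \<le> i \<Longrightarrow> 1 \<le> s i"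
    and \<delta>_pos: "0 < \<delta>" and R_large: "2 \<le> \<delta> * real R" and L_pos: "1 \<le> L"
begin

definition level :: "nat \<Rightarrow> real" where
  "level j = 1 - real j * \<delta>"

definition window_start :: "nat \<Rightarrow> nat" where
  "window_start p = (if p \<le> L then 1 else p + 1 - L)"

definition gain :: "nat \<Rightarrow> real" where
  "gain p = (\<Prod>i = Suc (window_start p)..Suc p. s i)"

definition nudge :: "nat \<Rightarrow> real" where
  "nudge p = level (Suc p) / (real R * gain p)"

definition round_requests :: "nat \<Rightarrow> real list" where
  "round_requests p = (level (window_start p) + nudge p) # map level [window_start p..<Suc p]"

definition phase_requests :: "nat \<Rightarrow> real list" where
  "phase_requests p = concat (replicate R (round_requests p))"

definition adversary_requests :: "nat \<Rightarrow> real list" where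
  "adversary_requests P = level 1 # concat (map phase_requests [1..<Suc P])"

lemma level_Suc: "level (Suc j) = level j - \<delta>"
  by (simp add: level_def algebra_simps)

lemma level_antimono: "j \<le> k \<Longrightarrow> level k \<le> level j"
  using \<delta>_pos by (simp add: level_def mult_right_mono)

lemma level_gap: "j < k \<Longrightarrow> level k + \<delta> \<le> level j"
  using level_antimono[of "Suc j" k] by (simp add: level_Suc)

lemma level_le_1: "level j \<le> 1"
  using level_antimono[of 0 j] by (simp add: level_def)

lemma window_start_ge_1: "1 \<le> window_start p"
  unfolding window_start_def by (simp split: if_split) arith

lemma window_start_le: "1 \<le> p \<Longrightarrow> window_start p \<le> p"
  unfolding window_start_def using L_pos by (simp split: if_split) arith

lemma window_start_mono: "p \<le> q \<Longrightarrow> window_start p \<le> window_start q"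
  unfolding window_start_def by (simp split: if_split) arith

lemma window_short: "p < window_start p + L"
  by (simp add: window_start_def)

lemma window_start_Suc:
  "window_start (Suc p) = Suc (window_start p) \<or> window_start (Suc p) = 1 \<and> window_start p = 1"
  unfolding window_start_def using L_pos by (simp split: if_split) arith

lemma speed_prod_ge_1: "1 \<le> m \<Longrightarrow> 1 \<le> (\<Prod>i = Suc m..n. s i)"
  by (rule prod_ge_1) (simp add: speeds)

lemma speed_prod_mono:
  "1 \<le> m \<Longrightarrow> n \<le> n' \<Longrightarrow> (\<Prod>i = Suc m..n. s i) \<le> (\<Prod>i = Suc m..n'. s i)"
proof (rule prod_mono2)
  assume "1 \<le> m"
  then show "\<And>i. i \<in> {Suc m..n'} - {Suc m..n} \<Longrightarrow> 1 \<le> s i"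
    and "\<And>i. i \<in> {Suc m..n} \<Longrightarrow> 0 \<le> s i"
    using speeds by (auto intro: order.trans[OF zero_le_one])
qed auto

lemma speed_prod_Suc:
  "m \<le> j \<Longrightarrow> (\<Prod>i = Suc m..Suc j. s i) = (\<Prod>i = Suc m..j. s i) * s (Suc j)"
  by (simp add: prod.nat_ivl_Suc')

lemma gain_ge_1: "1 \<le> gain p"
  unfolding gain_def by (rule speed_prod_ge_1[OF window_start_ge_1])

lemma R_pos: "0 < real R"
  using R_large \<delta>_pos by (cases R) auto

text \<open>The last condition is the only place where the speeds enter: it keeps the total drift of
  the server just left of the window below \<open>\<delta>/2\<close> (see \<open>drift_le\<close>).\<close>

definition phase_ok :: "nat \<Rightarrow> bool" where
  "phase_ok p \<longleftrightarrow> 1 \<le> p \<and> real (Suc p) * \<delta> < 1 \<and> (2 \<le> window_start p \<longrightarrow> 2 \<le> \<delta> * gain p)"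

text \<open>Configuration of DC in phase \<open>p\<close> after \<open>r\<close> nudges, with the displacement of the current
  round sitting on server \<open>j\<close> (\<open>j = Suc p\<close> between rounds). Every round moves server
  \<open>window_start p - 1\<close> down by \<open>nudge p / s (window_start p)\<close> and server \<open>p + 1\<close> up by
  \<open>nudge p * gain p\<close>.\<close>

definition phase_config :: "nat \<Rightarrow> nat \<Rightarrow> nat \<Rightarrow> (nat \<Rightarrow> real) \<Rightarrow> bool" where
  "phase_config p r j x \<longleftrightarrow>
    (\<forall>k. 1 \<le> k \<and> k + 1 < window_start p \<longrightarrow> level (k + 1) \<le> x k) \<and>
    (2 \<le> window_start p \<longrightarrow>
       x (window_start p - 1) = level (window_start p - 1) - real r * nudge p / s (window_start p)) \<and>
    (\<forall>k. window_start p \<le> k \<and> k \<le> p \<and> k \<noteq> j \<longrightarrow> x k = level k) \<and>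
    (j \<le> p \<longrightarrow> x j = level j + nudge p * (\<Prod>i = Suc (window_start p)..j. s i)) \<and>
    x (Suc p) = (real r - (if j \<le> p then 1 else 0)) * nudge p * gain p \<and>
    (\<forall>k. p + 2 \<le> k \<longrightarrow> x k = 0)"

context
  fixes p :: nat
  assumes ok: "phase_ok p"
begin

lemma phase_pos: "1 \<le> p"
  using ok by (simp add: phase_ok_def)

lemma nudge_pos: "0 < nudge p"
proof -
  have "0 < level (Suc p)" using ok by (simp add: phase_ok_def level_def)
  then show ?thesis unfolding nudge_def using R_pos gain_ge_1[of p] by simp
qed

lemma nudge_gain: "real R * (nudge p * gain p) = level (Suc p)"
  unfolding nudge_def using R_pos gain_ge_1[of p] by simp

lemma nudge_gain_less: "nudge p * gain p < \<delta> / 2"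
proof -
  have "level (Suc p) < 1" using \<delta>_pos by (simp add: level_def)
  moreover have "1 \<le> real R * (\<delta> / 2)" using R_large by (simp add: mult.commute)
  ultimately have "real R * (nudge p * gain p) < real R * (\<delta> / 2)"
    using nudge_gain by linarith
  then show ?thesis using R_pos by simp
qed

lemma nudge_less: "nudge p < \<delta> / 2"
  using nudge_gain_less nudge_pos gain_ge_1[of p] mult_left_mono[of 1 "gain p" "nudge p"]
  by linarith

lemma drift_le:
  assumes "2 \<le> window_start p" and "r \<le> R"
  shows "real r * nudge p / s (window_start p) \<le> \<delta> / 2"
proof -
  have "real r * nudge p / s (window_start p) \<le> real r * nudge p / 1"
    using nudge_pos speeds[OF assms(1)] by (intro divide_left_mono) auto
  also have "\<dots> \<le> real R * nudge p"
    using assms(2) nudge_pos by (simp add: mult_right_mono)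
  also have "\<dots> = level (Suc p) / gain p"
    using nudge_gain gain_ge_1[of p] by (simp add: field_simps)
  also have "\<dots> \<le> 1 / gain p"
    using level_le_1 gain_ge_1[of p] by (simp add: divide_right_mono)
  also have "\<dots> \<le> \<delta> / 2"
    using ok assms(1) gain_ge_1[of p] by (simp add: phase_ok_def field_simps)
  finally show ?thesis .
qed

lemma phase_config_left_ge:
  assumes cfg: "phase_config p r j x" and "r \<le> R" and k: "1 \<le> k" "k < window_start p"
  shows "level (window_start p) + \<delta> / 2 \<le> x k"
proof (cases "k + 1 < window_start p")
  case True
  then have "level (k + 1) \<le> x k" using cfg k by (simp add: phase_config_def)
  moreover have "level (window_start p) + \<delta> \<le> level (k + 1)" using level_gap True by simp
  ultimately show ?thesis using \<delta>_pos by simp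
next
  case False
  then have a: "Suc k = window_start p" "window_start p - 1 = k" "2 \<le> window_start p"
    using k by auto
  then have "x k = level (window_start p) + \<delta> - real r * nudge p / s (window_start p)"
    using cfg level_Suc[of k] by (simp add: phase_config_def)
  then show ?thesis using drift_le[OF a(3) \<open>r \<le> R\<close>] by simp
qed

lemma phase_config_nudge:
  assumes cfg: "phase_config p r (Suc p) x" and "r < R"
  shows "phase_config p (Suc r) (window_start p)
           (fst (dc_step s x (level (window_start p) + nudge p)))"
proof -
  let ?a = "window_start p" and ?e = "nudge p"
  have a: "1 \<le> ?a" "?a \<le> p" using window_start_ge_1 window_start_le[OF phase_pos] .
  have xa: "x ?a = level ?a" using cfg a by (simp add: phase_config_def)
  show ?thesis
  proof (cases "?a = 1")
    case True
    then have "fst (dc_step s x (level ?a + ?e)) = x(1 := level 1 + ?e)"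
      using xa nudge_pos by (simp add: dc_step_right)
    then show ?thesis using cfg True a by (auto simp: phase_config_def)
  next
    case False
    then have a2: "2 \<le> ?a" "Suc (?a - 1) = ?a" using a by auto
    have s: "1 \<le> s ?a" using speeds a2 by simp
    have xa1: "x (?a - 1) = level ?a + \<delta> - real r * ?e / s ?a"
      using cfg a2 level_Suc[of "?a - 1"] by (simp add: phase_config_def)
    have drift: "real r * ?e / s ?a + ?e / s ?a \<le> \<delta> / 2"
      using drift_le[OF a2(1), of "Suc r"] \<open>r < R\<close> by (simp add: add_divide_distrib algebra_simps)
    have "?e / s ?a \<le> x (?a - 1) - (level ?a + ?e)"
      using xa1 drift nudge_less by linarith
    then have t: "min ((level ?a + ?e - x (Suc (?a - 1))) / s (Suc (?a - 1)))
        (x (?a - 1) - (level ?a + ?e)) = ?e / s ?a"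
      using xa a2(2) by simp
    have "level ?a + ?e < x k" if "1 \<le> k" "k \<le> ?a - 1" for k
      using phase_config_left_ge[OF cfg, of k] that a2 nudge_less \<open>r < R\<close> by simp
    then have "fst (dc_step s x (level ?a + ?e))
        = x(?a - 1 := x (?a - 1) - ?e / s ?a, ?a := level ?a + ?e)"
      using dc_step_between[of "?a - 1" x "level ?a + ?e" s] a2 xa nudge_pos s
      unfolding t by simp
    moreover have "x (?a - 1) - ?e / s ?a
        = level (?a - 1) - real (Suc r) * ?e / s ?a"
      using xa1 level_Suc[of "?a - 1"] a2(2) by (simp add: add_divide_distrib algebra_simps)
    ultimately show ?thesis using cfg a a2 by (auto simp: phase_config_def)
  qed
qed

lemma phase_config_room:
  assumes cfg: "phase_config p r j x" and r: "1 \<le> r" "r \<le> R"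
    and j: "window_start p \<le> j" "j \<le> p"
  shows "x (Suc j) + s (Suc j) * (nudge p * (\<Prod>i = Suc (window_start p)..j. s i)) \<le> level j"
proof -
  have push: "s (Suc j) * (nudge p * (\<Prod>i = Suc (window_start p)..j. s i))
      = nudge p * (\<Prod>i = Suc (window_start p)..Suc j. s i)"
    using speed_prod_Suc[OF j(1)] by simp
  show ?thesis
  proof (cases "j < p")
    case True
    have "nudge p * (\<Prod>i = Suc (window_start p)..Suc j. s i) \<le> nudge p * gain p"
      unfolding gain_def using True nudge_pos
      by (intro mult_left_mono speed_prod_mono window_start_ge_1) auto
    moreover have "x (Suc j) = level j - \<delta>"
      using cfg True j level_Suc[of j] by (simp add: phase_config_def)
    ultimately show ?thesis using push nudge_gain_less \<delta>_pos by linarith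
  next
    case False
    then have "j = p" using j by simp
    have "s (Suc j) * (nudge p * (\<Prod>i = Suc (window_start p)..j. s i)) = nudge p * gain p"
      using push \<open>j = p\<close> by (simp add: gain_def)
    moreover have "x (Suc j) = (real r - 1) * nudge p * gain p"
      using cfg \<open>j = p\<close> by (simp add: phase_config_def)
    ultimately have "x (Suc j) + s (Suc j) * (nudge p * (\<Prod>i = Suc (window_start p)..j. s i))
        = (real r - 1) * nudge p * gain p + nudge p * gain p"
      by (simp only:)
    also have "\<dots> = real r * (nudge p * gain p)"
      by (simp add: algebra_simps)
    also have "\<dots> \<le> real R * (nudge p * gain p)"
      using r nudge_pos gain_ge_1[of p] by (intro mult_right_mono) auto
    also have "\<dots> \<le> level j"
      using nudge_gain level_antimono[of j "Suc p"] \<open>j = p\<close> by simp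
    finally show ?thesis .
  qed
qed

lemma phase_config_right_of_level:
  assumes cfg: "phase_config p r j x" and "r \<le> R" and j: "window_start p \<le> j" "j \<le> p"
    and k: "1 \<le> k" "k \<le> j"
  shows "level j < x k"
proof -
  consider "k < window_start p" | "window_start p \<le> k" "k < j" | "k = j"
    using k(2) by (metis le_neq_implies_less not_le)
  then show ?thesis
  proof cases
    case 1
    then show ?thesis
      using phase_config_left_ge[OF cfg \<open>r \<le> R\<close> k(1)] level_antimono[OF j(1)] \<delta>_pos by simp
  next
    case 2
    then show ?thesis using cfg j level_gap[of k j] \<delta>_pos by (simp add: phase_config_def)
  next
    case 3
    have "0 < nudge p * (\<Prod>i = Suc (window_start p)..j. s i)"
      using nudge_pos speed_prod_ge_1[OF window_start_ge_1] by (simp add: less_le_trans)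
    then show ?thesis using 3 cfg j by (simp add: phase_config_def)
  qed
qed

lemma phase_config_restore:
  assumes cfg: "phase_config p r j x" and r: "1 \<le> r" "r \<le> R"
    and j: "window_start p \<le> j" "j \<le> p"
  shows "phase_config p r (Suc j) (fst (dc_step s x (level j)))"
proof -
  let ?a = "window_start p"
  let ?d = "nudge p * (\<Prod>i = Suc ?a..j. s i)"
  have d: "0 < ?d" using nudge_pos speed_prod_ge_1[OF window_start_ge_1] by (simp add: less_le_trans)
  have xj: "x j = level j + ?d" using cfg j by (simp add: phase_config_def)
  have s: "1 \<le> s (Suc j)" using speeds window_start_ge_1[of p] j by simp
  have room: "x (Suc j) + s (Suc j) * ?d \<le> level j" by (rule phase_config_room[OF cfg r j])
  have right: "level j < x k" if "1 \<le> k" "k \<le> j" for k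
    using phase_config_right_of_level[OF cfg r(2) j] that .
  have "?d \<le> (level j - x (Suc j)) / s (Suc j)"
    using room s by (simp add: pos_le_divide_eq mult.commute)
  then have t: "min ((level j - x (Suc j)) / s (Suc j)) (x j - level j) = ?d"
    using xj by simp
  have "x (Suc j) \<le> level j" using room mult_nonneg_nonneg[of "s (Suc j)" ?d] s d by linarith
  then have step: "fst (dc_step s x (level j)) = x(j := level j, Suc j := x (Suc j) + s (Suc j) * ?d)"
    using dc_step_between[of j x "level j" s] right j window_start_ge_1[of p] xj
    unfolding t by simp
  show ?thesis
    unfolding phase_config_def step
  proof (intro conjI allI impI)
    assume "Suc j \<le> p"
    then show "(x(j := level j, Suc j := x (Suc j) + s (Suc j) * ?d)) (Suc j)
        = level (Suc j) + nudge p * (\<Prod>i = Suc ?a..Suc j. s i)"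
      using cfg j speed_prod_Suc[OF j(1)] by (simp add: phase_config_def)
  next
    show "(x(j := level j, Suc j := x (Suc j) + s (Suc j) * ?d)) (Suc p)
        = (real r - (if Suc j \<le> p then 1 else 0)) * nudge p * gain p"
      using cfg j speed_prod_Suc[OF j(1)]
      by (cases "j = p") (auto simp: phase_config_def gain_def algebra_simps)
  qed (use cfg j in \<open>auto simp: phase_config_def\<close>)
qed

lemma phase_config_restore_chain:
  assumes "phase_config p r j x" "1 \<le> r" "r \<le> R" "window_start p \<le> j" "j \<le> Suc p"
  shows "phase_config p r (Suc p) (dc_config s x (map level [j..<Suc p]))"
  using assms
proof (induction "Suc p - j" arbitrary: j x)
  case (Suc m)
  then have j: "j \<le> p" by simp
  have step: "phase_config p r (Suc j) (fst (dc_step s x (level j)))"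
    using Suc.prems j by (intro phase_config_restore) auto
  have "[j..<Suc p] = j # [Suc j..<Suc p]" using j by (simp add: upt_conv_Cons)
  moreover have "phase_config p r (Suc p) (dc_config s (fst (dc_step s x (level j))) (map level [Suc j..<Suc p]))"
    using Suc.hyps(1)[OF _ step] Suc.hyps(2) Suc.prems j by simp
  ultimately show ?case by simp
qed simp

lemma phase_config_round:
  assumes "phase_config p r (Suc p) x" and "r < R"
  shows "phase_config p (Suc r) (Suc p) (dc_config s x (round_requests p))"
  using phase_config_restore_chain[OF phase_config_nudge[OF assms]] assms(2)
    window_start_le[OF phase_pos]
  by (simp add: round_requests_def)

lemma phase_config_rounds:
  "phase_config p r (Suc p) x \<Longrightarrow> r + m \<le> R \<Longrightarrow>
    phase_config p (r + m) (Suc p) (dc_config s x (concat (replicate m (round_requests p))))"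
proof (induction m arbitrary: r x)
  case (Suc m)
  then have "phase_config p (Suc r) (Suc p) (dc_config s x (round_requests p))"
    by (intro phase_config_round) auto
  with Suc.IH[of "Suc r"] Suc.prems show ?case by (simp add: dc_config_append)
qed simp

lemma phase_config_next_phase:
  assumes cfg: "phase_config p R (Suc p) x"
  shows "phase_config (Suc p) 0 (Suc (Suc p)) x"
proof -
  let ?a = "window_start p"
  have a: "1 \<le> ?a" "?a \<le> p" using window_start_ge_1 window_start_le[OF phase_pos] .
  have top: "x (Suc p) = level (Suc p)"
    using cfg nudge_gain by (simp add: phase_config_def algebra_simps)
  from window_start_Suc[of p] show ?thesis
  proof
    assume a': "window_start (Suc p) = Suc ?a"
    have "level (k + 1) \<le> x k" if k: "1 \<le> k" "k + 1 < Suc ?a" for k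
    proof (cases "k + 1 = ?a")
      case True
      then show ?thesis using phase_config_left_ge[OF cfg order.refl k(1)] \<delta>_pos by simp
    next
      case False
      then show ?thesis using cfg k by (simp add: phase_config_def)
    qed
    then show ?thesis
      using cfg top a a' by (auto simp: phase_config_def le_Suc_eq)
  next
    assume "window_start (Suc p) = 1 \<and> ?a = 1"
    then show ?thesis using cfg top a by (auto simp: phase_config_def le_Suc_eq)
  qed
qed

end

lemma phase_config_phase:
  assumes "phase_ok p" and "phase_config p 0 (Suc p) x"
  shows "phase_config (Suc p) 0 (Suc (Suc p)) (dc_config s x (phase_requests p))"
  using phase_config_rounds[OF assms, of R] phase_config_next_phase[OF assms(1)]
  by (simp add: phase_requests_def)

lemma phase_config_phases:
  "(\<And>q. p \<le> q \<Longrightarrow> q < p + m \<Longrightarrow> phase_ok q) \<Longrightarrow> phase_config p 0 (Suc p) x \<Longrightarrow>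
    phase_config (p + m) 0 (Suc (p + m)) (dc_config s x (concat (map phase_requests [p..<p + m])))"
proof (induction m arbitrary: p x)
  case (Suc m)
  have "[p..<p + Suc m] = p # [Suc p..<Suc p + m]" by (simp add: upt_conv_Cons)
  moreover have "phase_config (Suc p) 0 (Suc (Suc p)) (dc_config s x (phase_requests p))"
    using Suc.prems by (intro phase_config_phase) auto
  ultimately show ?case using Suc.IH[of "Suc p"] Suc.prems by (simp add: dc_config_append)
qed simp

lemma phase_config_initial: "\<delta> < 1 \<Longrightarrow> phase_config 1 0 2 (dc_config s (\<lambda>_. 0) [level 1])"
  using L_pos by (auto simp: phase_config_def dc_step_right level_def window_start_def)

lemma phase_config_ge_level:
  assumes "phase_config q 0 (Suc q) x" "1 \<le> k" "k \<le> q"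
  shows "level (Suc k) \<le> x k"
proof -
  consider "k + 1 < window_start q" | "2 \<le> window_start q" "Suc k = window_start q"
    | "window_start q \<le> k"
    using assms(2) by linarith
  then show ?thesis
  proof cases
    case 2
    then have "window_start q - 1 = k" by simp
    then have "x k = level k" using 2 assms(1) by (auto simp: phase_config_def)
    then show ?thesis using level_antimono[of k "Suc k"] by simp
  qed (use assms level_antimono[of k "Suc k"] in \<open>auto simp: phase_config_def\<close>)
qed

lemma adversary_requests_bounds:
  assumes ok: "\<And>q. 1 \<le> q \<Longrightarrow> q \<le> P \<Longrightarrow> phase_ok q" and "\<delta> < 1"
    and r: "r \<in> set (adversary_requests P)"
  shows "0 < r \<and> r \<le> 1"
proof -
  consider "r = level 1"
    | q where "1 \<le> q" "q \<le> P" "r = level (window_start q) + nudge q"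
    | q j where "1 \<le> q" "q \<le> P" "window_start q \<le> j" "j \<le> q" "r = level j"
    using r unfolding adversary_requests_def phase_requests_def round_requests_def
    by (fastforce split: if_splits)
  then show ?thesis
  proof cases
    case 1
    then show ?thesis using \<open>\<delta> < 1\<close> \<delta>_pos by (simp add: level_def)
  next
    case (2 q)
    have "0 < level (Suc q)" using ok[OF 2(1,2)] by (simp add: phase_ok_def level_def)
    moreover have "level (Suc q) \<le> level (window_start q)"
      using level_antimono window_start_le[OF 2(1)] by simp
    moreover have "level (window_start q) \<le> level 1"
      using level_antimono[OF window_start_ge_1] .
    moreover have "level 1 = 1 - \<delta>" by (simp add: level_def)
    ultimately show ?thesis
      using 2(3) nudge_pos[OF ok[OF 2(1,2)]] nudge_less[OF ok[OF 2(1,2)]] by linarith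
  next
    case (3 q j)
    have "0 < level (Suc q)" using ok[OF 3(1,2)] by (simp add: phase_ok_def level_def)
    then show ?thesis using 3 level_antimono[of j "Suc q"] level_le_1[of j] by simp
  qed
qed

lemma ALG_adversary_requests:
  assumes ok: "\<And>q. 1 \<le> q \<Longrightarrow> q \<le> P \<Longrightarrow> phase_ok q" and "\<delta> < 1"
  shows "real (Suc P) * level (P + 2) \<le> ALG_DC s (adversary_requests P)"
proof -
  let ?y = "dc_config s (\<lambda>_. 0) (adversary_requests P)"
  have "adversary_requests P = [level 1] @ concat (map phase_requests [1..<1 + P])"
    by (simp add: adversary_requests_def)
  moreover have "phase_config (1 + P) 0 (Suc (1 + P))
      (dc_config s (dc_config s (\<lambda>_. 0) [level 1]) (concat (map phase_requests [1..<1 + P])))"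
    by (rule phase_config_phases) (use ok phase_config_initial[OF \<open>\<delta> < 1\<close>] in \<open>auto simp: numeral_2_eq_2\<close>)
  ultimately have y: "phase_config (1 + P) 0 (Suc (1 + P)) ?y"
    by (simp only: dc_config_append)
  have "level (P + 2) \<le> ?y k - 0" if "k \<in> {1..Suc P}" for k
  proof -
    have "level (Suc k) \<le> ?y k" using that by (intro phase_config_ge_level[OF y]) auto
    moreover have "level (P + 2) \<le> level (Suc k)" using that by (intro level_antimono) auto
    ultimately show ?thesis by simp
  qed
  then have "(\<Sum>k\<in>{1..Suc P}. level (P + 2)) \<le> (\<Sum>k\<in>{1..Suc P}. ?y k - 0)"
    by (rule sum_mono)
  also have "\<dots> \<le> ALG_DC s (adversary_requests P)"
    unfolding ALG_DC_def
    using adversary_requests_bounds[OF ok \<open>\<delta> < 1\<close>]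
    by (intro dc_run_ge_displacement[OF speeds]) (auto simp: less_imp_le)
  finally show ?thesis by simp
qed

definition offline_server :: "real \<Rightarrow> nat" where
  "offline_server v = (if \<exists>j. v = level j then Suc (nat \<lfloor>(1 - v) / \<delta>\<rfloor> mod L) else 0)"

abbreviation served_in_order :: "real \<Rightarrow> real \<Rightarrow> bool" where
  "served_in_order u v \<equiv> offline_server u = offline_server v \<longrightarrow> v \<le> u"

lemma offline_server_level: "offline_server (level j) = Suc (j mod L)"
proof -
  have "(1 - level j) / \<delta> = real j" using \<delta>_pos by (simp add: level_def)
  then show ?thesis unfolding offline_server_def by auto
qed

lemma offline_server_nudged:
  assumes "0 < e" "e < \<delta>"
  shows "offline_server (level b + e) = 0"
proof -
  have "level b + e \<noteq> level j" for j
    using assms level_gap[of j b] level_antimono[of b j] by (cases "j < b") auto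
  then show ?thesis unfolding offline_server_def by auto
qed

lemma set_round_requests:
  "set (round_requests q) = insert (level (window_start q) + nudge q) (level ` {window_start q..q})"
  by (auto simp: round_requests_def)

lemma nudge_antimono:
  assumes ok: "phase_ok q" "phase_ok q'" and "q \<le> q'" and "window_start q = window_start q'"
  shows "nudge q' \<le> nudge q"
proof -
  have "gain q \<le> gain q'"
    unfolding gain_def using assms(3,4) by (metis Suc_le_mono speed_prod_mono window_start_ge_1)
  moreover have "level (Suc q') \<le> level (Suc q)" using assms(3) level_antimono by simp
  moreover have "0 < level (Suc q')" using ok(2) by (simp add: phase_ok_def level_def)
  ultimately show ?thesis
    unfolding nudge_def using R_pos gain_ge_1[of q] by (intro frac_le) auto
qed

lemma offline_server_nudged_request:
  assumes "phase_ok q"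
  shows "offline_server (level (window_start q) + nudge q) = 0"
  using nudge_pos[OF assms] nudge_less[OF assms] \<delta>_pos by (intro offline_server_nudged) auto

lemma set_phase_requests: "set (phase_requests q) \<subseteq> set (round_requests q)"
  by (simp add: phase_requests_def set_replicate_conv_if)

lemma served_in_order_round:
  assumes ok: "phase_ok q" and "u \<in> set (round_requests q)" "v \<in> set (round_requests q)"
  shows "served_in_order u v"
proof
  assume same: "offline_server u = offline_server v"
  consider "u = v"
    | j j' where "u = level j" "v = level j'" "j mod L = j' mod L"
        "window_start q \<le> j" "j \<le> q" "window_start q \<le> j'" "j' \<le> q"
    using assms(2,3) same offline_server_nudged_request[OF ok]
    by (auto simp: set_round_requests offline_server_level)
  then show "v \<le> u"
  proof cases
    case (2 j j')
    then show ?thesis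
      using mod_inj_on_short_interval[of j L j' "window_start q"] window_short[of q] by simp
  qed simp
qed

lemma served_in_order_phases:
  assumes ok: "phase_ok q" "phase_ok q'" and "q < q'"
    and u: "u \<in> set (round_requests q)" and v: "v \<in> set (round_requests q')"
  shows "served_in_order u v"
proof
  assume same: "offline_server u = offline_server v"
  have a: "window_start q \<le> window_start q'" using window_start_mono \<open>q < q'\<close> by simp
  consider "u = level (window_start q) + nudge q" "v = level (window_start q') + nudge q'"
    | j j' where "u = level j" "window_start q \<le> j" "j \<le> q"
        "v = level j'" "window_start q' \<le> j'" "j' \<le> q'"
    using u v same offline_server_nudged_request[OF ok(1)] offline_server_nudged_request[OF ok(2)]
    by (auto simp: set_round_requests offline_server_level)
  then show "v \<le> u"
  proof cases
    case 1
    show ?thesis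
    proof (cases "window_start q = window_start q'")
      case True
      then show ?thesis using 1 nudge_antimono[OF ok] \<open>q < q'\<close> by simp
    next
      case False
      then have "level (window_start q') + \<delta> \<le> level (window_start q)"
        using a level_gap by simp
      then show ?thesis using 1 nudge_less[OF ok(2)] nudge_pos[OF ok(1)] \<delta>_pos by simp
    qed
  next
    case (2 j j')
    have "j' \<le> j \<Longrightarrow> j = j'"
      using 2 same \<open>q < q'\<close> window_short[of q'] mod_inj_on_short_interval[of j L j' "window_start q'"]
      by (simp add: offline_server_level)
    then show ?thesis using 2 level_antimono[of j j'] by (cases "j \<le> j'") auto
  qed
qed

lemma served_in_order_level_1:
  assumes "phase_ok q" and "v \<in> set (round_requests q)"
  shows "served_in_order (level 1) v"
  using assms(2) offline_server_nudged_request[OF assms(1)] window_start_ge_1[of q]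
    level_antimono[of 1] offline_server_level
  by (auto simp: set_round_requests)

lemma adversary_requests_served_in_order:
  assumes ok: "\<And>q. 1 \<le> q \<Longrightarrow> q \<le> P \<Longrightarrow> phase_ok q"
  shows "sorted_wrt served_in_order (adversary_requests P)"
proof -
  have "sorted_wrt served_in_order (concat (map phase_requests [1..<Suc P]))"
  proof (rule sorted_wrt_concat_map)
    show "sorted_wrt served_in_order (phase_requests q)" if "q \<in> set [1..<Suc P]" for q
    proof (rule sorted_wrt_all_pairs)
      fix u v assume "u \<in> set (phase_requests q)" "v \<in> set (phase_requests q)"
      moreover have "phase_ok q" using that by (intro ok) auto
      ultimately show "served_in_order u v"
        using served_in_order_round set_phase_requests by blast
    qed
    show "sorted_wrt (\<lambda>q q'. \<forall>u\<in>set (phase_requests q). \<forall>v\<in>set (phase_requests q').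
        served_in_order u v) [1..<Suc P]"
      using sorted_wrt_upt[of 1 "Suc P"]
    proof (rule sorted_wrt_mono_rel[rotated])
      fix q q' assume "q \<in> set [1..<Suc P]" "q' \<in> set [1..<Suc P]" "q < q'"
      then have ok': "phase_ok q" "phase_ok q'" "q < q'" by (auto intro: ok)
      show "\<forall>u\<in>set (phase_requests q). \<forall>v\<in>set (phase_requests q'). served_in_order u v"
      proof (intro ballI)
        fix u v assume "u \<in> set (phase_requests q)" "v \<in> set (phase_requests q')"
        then show "served_in_order u v"
          using served_in_order_phases[OF ok'] set_phase_requests by blast
      qed
    qed
  qed
  moreover have "served_in_order (level 1) v"
    if "v \<in> set (concat (map phase_requests [1..<Suc P]))" for v
  proof -
    from that obtain q where "1 \<le> q" "q \<le> P" "v \<in> set (phase_requests q)" by auto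
    then show ?thesis using served_in_order_level_1[OF ok] set_phase_requests by blast
  qed
  ultimately show ?thesis by (simp add: adversary_requests_def)
qed

lemma OPT_adversary_requests:
  assumes ok: "\<And>q. 1 \<le> q \<Longrightarrow> q \<le> P \<Longrightarrow> phase_ok q" and "\<delta> < 1"
  shows "OPT (adversary_requests P) \<le> 2 * real (Suc L)"
  using OPT_le_assignment[of 1 "adversary_requests P" offline_server "Suc L"]
    adversary_requests_bounds[OF ok \<open>\<delta> < 1\<close>] adversary_requests_served_in_order[OF ok]
    L_pos
  by (auto simp: offline_server_def)

end

lemma adversary_sequence:
  fixes s :: "nat \<Rightarrow> real"
  assumes speeds: "\<And>i. 2 \<le> i \<Longrightarrow> 1 \<le> s i" and "1 \<le> L" and "3 \<le> M"
    and windows: "\<And>m. 2 \<le> m \<Longrightarrow> 4 * real M \<le> (\<Prod>i = Suc m..m + L. s i)"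
  obtains \<sigma> where "\<forall>r\<in>set \<sigma>. 0 \<le> r" and "real M - 1 \<le> 2 * ALG_DC s \<sigma>"
    and "OPT \<sigma> \<le> 2 * real (Suc L)"
proof -
  define \<delta> where "\<delta> = 1 / (2 * real M)"
  have M: "0 < real M" using \<open>3 \<le> M\<close> by simp
  interpret dc_adversary s L \<delta> "4 * M"
    by unfold_locales (use speeds \<open>1 \<le> L\<close> M in \<open>auto simp: \<delta>_def\<close>)
  have "\<delta> < 1" using \<open>3 \<le> M\<close> by (simp add: \<delta>_def)
  have ok: "phase_ok q" if "1 \<le> q" "q \<le> M - 2" for q
    unfolding phase_ok_def
  proof (intro conjI impI)
    show "real (Suc q) * \<delta> < 1" using that M by (simp add: \<delta>_def field_simps)
    assume "2 \<le> window_start q"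
    then have "4 * real M \<le> gain q"
      unfolding gain_def using windows[of "window_start q"]
      by (simp add: window_start_def split: if_splits)
    then show "2 \<le> \<delta> * gain q" using M by (simp add: \<delta>_def field_simps)
  qed (use that in simp)
  let ?\<sigma> = "adversary_requests (M - 2)"
  show ?thesis
  proof (rule that)
    show "\<forall>r\<in>set ?\<sigma>. 0 \<le> r"
      using adversary_requests_bounds[of "M - 2", OF ok \<open>\<delta> < 1\<close>] by (auto simp: less_imp_le)
    have "level (M - 2 + 2) = 1 - real M * \<delta>"
      using \<open>3 \<le> M\<close> by (simp add: level_def)
    then have "real (Suc (M - 2)) * level (M - 2 + 2) = (real M - 1) / 2"
      using \<open>3 \<le> M\<close> M by (simp add: \<delta>_def of_nat_diff)
    then show "real M - 1 \<le> 2 * ALG_DC s ?\<sigma>"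
      using ALG_adversary_requests[of "M - 2", OF ok \<open>\<delta> < 1\<close>] by simp
    show "OPT ?\<sigma> \<le> 2 * real (Suc L)" by (rule OPT_adversary_requests[of "M - 2", OF ok \<open>\<delta> < 1\<close>])
  qed
qed

lemma not_competitive_if_window_products_superlinear:
  fixes s :: "nat \<Rightarrow> real"
  assumes speeds: "\<And>i. 2 \<le> i \<Longrightarrow> 1 \<le> s i"
    and superlinear: "\<And>B. \<exists>L\<ge>1. \<forall>m\<ge>2. B * real (Suc L) \<le> (\<Prod>i = Suc m..m + L. s i)"
  shows "\<not> DC_competitive s"
proof
  assume "DC_competitive s"
  then obtain \<rho> C where comp: "\<And>\<sigma>. \<forall>r\<in>set \<sigma>. 0 \<le> r \<Longrightarrow> ALG_DC s \<sigma> \<le> \<rho> * OPT \<sigma> + C"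
    unfolding DC_competitive_def by blast
  define \<rho>' where "\<rho>' = max \<rho> 0"
  obtain L where "1 \<le> L"
    and L: "\<And>m. 2 \<le> m \<Longrightarrow> (16 * \<rho>' + 8 * \<bar>C\<bar> + 16) * real (Suc L) \<le> (\<Prod>i = Suc m..m + L. s i)"
    using superlinear by blast
  define X where "X = \<rho>' * real (Suc L)"
  have "0 \<le> X" by (simp add: X_def \<rho>'_def)
  define M where "M = nat \<lceil>4 * X + 2 * \<bar>C\<bar>\<rceil> + 3"
  have M: "3 \<le> M" "4 * X + 2 * \<bar>C\<bar> + 3 \<le> real M" "real M \<le> 4 * X + 2 * \<bar>C\<bar> + 4"
    using \<open>0 \<le> X\<close> unfolding M_def by linarith+
  have windows: "4 * real M \<le> (\<Prod>i = Suc m..m + L. s i)" if "2 \<le> m" for m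
  proof -
    have "(16 * \<rho>' + 8 * \<bar>C\<bar> + 16) * real (Suc L) = 16 * X + (8 * \<bar>C\<bar> + 16) * real (Suc L)"
      by (simp add: X_def algebra_simps)
    moreover have "8 * \<bar>C\<bar> + 16 \<le> (8 * \<bar>C\<bar> + 16) * real (Suc L)"
      using mult_left_mono[of 1 "real (Suc L)" "8 * \<bar>C\<bar> + 16"] by simp
    ultimately show ?thesis using M(3) L[OF that] by linarith
  qed
  obtain \<sigma> where \<sigma>: "\<forall>r\<in>set \<sigma>. 0 \<le> r" "real M - 1 \<le> 2 * ALG_DC s \<sigma>"
    "OPT \<sigma> \<le> 2 * real (Suc L)"
    using adversary_sequence[where s = s, OF speeds \<open>1 \<le> L\<close> M(1) windows] by blast
  have "\<rho> * OPT \<sigma> \<le> \<rho>' * OPT \<sigma>"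
    using OPT_nonneg[OF \<sigma>(1)] by (simp add: \<rho>'_def mult_right_mono)
  also have "\<dots> \<le> \<rho>' * (2 * real (Suc L))"
    using \<sigma>(3) by (rule mult_left_mono) (simp add: \<rho>'_def)
  also have "\<dots> = 2 * X" by (simp add: X_def)
  finally have "real M - 1 \<le> 4 * X + 2 * \<bar>C\<bar>"
    using comp[OF \<sigma>(1)] \<sigma>(2) abs_ge_self[of C] by linarith
  then show False using M(2) by linarith
qed

lemma exponential_dominates_linear:
  fixes c B :: real
  assumes "1 < c"
  obtains L where "1 \<le> L" and "B * real (Suc L) \<le> c ^ (L - N)"
proof -
  have "eventually (\<lambda>L. B * (real L + 1) \<le> c powr real L / c ^ N) sequentially"
    using assms by real_asymp
  then obtain L0 where L0: "\<And>L. L0 \<le> L \<Longrightarrow> B * (real L + 1) \<le> c ^ L / c ^ N"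
    using assms by (auto simp: eventually_sequentially powr_realpow)
  let ?L = "max (max L0 N) 1"
  have "c ^ ?L / c ^ N = c ^ (?L - N)" using assms by (simp add: power_diff)
  then have "B * real (Suc ?L) \<le> c ^ (?L - N)" using L0[of ?L] by (simp add: add.commute)
  then show ?thesis by (intro that[of ?L]) auto
qed

lemma window_product_ge_power:
  fixes s :: "nat \<Rightarrow> real"
  assumes speeds: "\<And>i. 2 \<le> i \<Longrightarrow> 1 \<le> s i" and "1 \<le> m"
    and fast: "\<And>i. N \<le> i \<Longrightarrow> c \<le> s i" and "0 \<le> c"
  shows "c ^ (L - N) \<le> (\<Prod>i = Suc m..m + L. s i)"
proof -
  have "c ^ (L - N) = (\<Prod>i = Suc m + N..m + L. c)" by simp
  also have "\<dots> \<le> (\<Prod>i = Suc m + N..m + L. s i)"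
    using fast \<open>0 \<le> c\<close> by (intro prod_mono) auto
  also have "\<dots> \<le> (\<Prod>i = Suc m..m + L. s i)"
    using speeds \<open>1 \<le> m\<close> by (intro prod_mono2) (auto intro: order.trans[OF zero_le_one])
  finally show ?thesis .
qed

lemma not_competitive_if_eventually_fast:
  fixes s :: "nat \<Rightarrow> real"
  assumes speeds: "\<And>i. 2 \<le> i \<Longrightarrow> 1 \<le> s i" and "1 < c" and fast: "\<And>i. N \<le> i \<Longrightarrow> c \<le> s i"
  shows "\<not> DC_competitive s"
proof (rule not_competitive_if_window_products_superlinear[OF speeds])
  fix B
  obtain L where "1 \<le> L" "B * real (Suc L) \<le> c ^ (L - N)"
    using exponential_dominates_linear[OF \<open>1 < c\<close>] .
  moreover have "c ^ (L - N) \<le> (\<Prod>i = Suc m..m + L. s i)" if "2 \<le> m" for m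
    using that \<open>1 < c\<close> by (intro window_product_ge_power[OF speeds _ fast]) auto
  ultimately show "\<exists>L\<ge>1. \<forall>m\<ge>2. B * real (Suc L) \<le> (\<Prod>i = Suc m..m + L. s i)"
    by (meson order.trans)
qed

lemma eventually_fast_if_liminf_gt_1:
  fixes s :: "nat \<Rightarrow> real"
  assumes "1 < liminf (\<lambda>i. ereal (s i))"
  obtains c N where "1 < c" and "\<And>i. N \<le> i \<Longrightarrow> c \<le> s i"
proof -
  obtain z where z: "1 < z" "z < liminf (\<lambda>i. ereal (s i))" using dense[OF assms] by blast
  then obtain c where c: "z = ereal c" by (cases z) auto
  have "eventually (\<lambda>i. ereal c < ereal (s i)) sequentially"
    using less_LiminfD z(2) c by blast
  then obtain N where "\<And>i. N \<le> i \<Longrightarrow> c < s i" by (auto simp: eventually_sequentially)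
  then show ?thesis using that[of c N] z(1) c by force
qed

lemma eventually_fast_if_window_product_gt_1:
  fixes s :: "nat \<Rightarrow> real"
  assumes speeds: "\<And>i. 2 \<le> i \<Longrightarrow> 1 \<le> s i"
    and monotonic: "(\<forall>i j. 2 \<le> i \<longrightarrow> i \<le> j \<longrightarrow> s i \<le> s j) \<or>
                    (\<forall>i j. 2 \<le> i \<longrightarrow> i \<le> j \<longrightarrow> s j \<le> s i)"
    and window: "\<And>k. 2 \<le> k \<Longrightarrow> b \<le> (\<Prod>i = k..k + n. s i)" and "1 < b"
  obtains c N where "1 < c" and "\<And>i. N \<le> i \<Longrightarrow> c \<le> s i"
  using monotonic
proof
  assume up: "\<forall>i j. 2 \<le> i \<longrightarrow> i \<le> j \<longrightarrow> s i \<le> s j"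
  have "\<exists>i\<in>{2..2 + n}. 1 < s i"
  proof (rule ccontr)
    assume "\<not> (\<exists>i\<in>{2..2 + n}. 1 < s i)"
    then have "(\<Prod>i = 2..2 + n. s i) \<le> 1"
      using speeds by (intro prod_le_1) (auto simp: not_less intro: order.trans[OF zero_le_one])
    then show False using window[of 2] \<open>1 < b\<close> by simp
  qed
  then obtain i where "2 \<le> i" "1 < s i" by auto
  then show ?thesis using that[of "s i" i] up by auto
next
  assume down: "\<forall>i j. 2 \<le> i \<longrightarrow> i \<le> j \<longrightarrow> s j \<le> s i"
  have "root (Suc n) b \<le> s k" if "2 \<le> k" for k
  proof -
    have "(\<Prod>i = k..k + n. s i) \<le> (\<Prod>i = k..k + n. s k)"
      using down speeds that by (intro prod_mono) (auto intro: order.trans[OF zero_le_one])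
    then have "b \<le> s k ^ Suc n" using window[OF that] by simp
    then have "root (Suc n) b \<le> root (Suc n) (s k ^ Suc n)" by simp
    also have "\<dots> = s k" using speeds[OF that] by (intro real_root_power_cancel) auto
    finally show ?thesis .
  qed
  then show ?thesis using that[of "root (Suc n) b" 2] \<open>1 < b\<close> by simp
qed

theorem lemma3:
  fixes s :: "nat \<Rightarrow> real"
  assumes speeds: "\<And>i. 2 \<le> i \<Longrightarrow> 1 \<le> s i"
    and monotonic: "(\<forall>i j. 2 \<le> i \<longrightarrow> i \<le> j \<longrightarrow> s i \<le> s j) \<or>
                    (\<forall>i j. 2 \<le> i \<longrightarrow> i \<le> j \<longrightarrow> s j \<le> s i)"
  shows "((\<exists>f :: nat \<Rightarrow> real. \<not> bdd_above (range f) \<and>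
            (\<forall>n k. 2 \<le> k \<longrightarrow> (\<Prod>i=k..k+n. s i) \<ge> f n))
            \<longrightarrow> \<not> DC_competitive s)
       \<and> (liminf (\<lambda>i. ereal (s i)) > 1 \<longrightarrow> \<not> DC_competitive s)"
proof (intro conjI impI)
  assume "\<exists>f :: nat \<Rightarrow> real. \<not> bdd_above (range f) \<and> (\<forall>n k. 2 \<le> k \<longrightarrow> (\<Prod>i=k..k+n. s i) \<ge> f n)"
  then obtain f :: "nat \<Rightarrow> real" where unbounded: "\<not> bdd_above (range f)"
    and window: "\<And>n k. 2 \<le> k \<Longrightarrow> f n \<le> (\<Prod>i=k..k+n. s i)" by auto
  obtain n where "1 < f n" using unbounded by (meson bdd_aboveI2 not_le)
  then obtain c N where c: "1 < c" and fast: "\<And>i. N \<le> i \<Longrightarrow> c \<le> s i"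
    using eventually_fast_if_window_product_gt_1[OF speeds monotonic window] by blast
  show "\<not> DC_competitive s" by (rule not_competitive_if_eventually_fast[OF speeds c fast])
next
  assume "liminf (\<lambda>i. ereal (s i)) > 1"
  then obtain c N where c: "1 < c" and fast: "\<And>i. N \<le> i \<Longrightarrow> c \<le> s i"
    using eventually_fast_if_liminf_gt_1 by blast
  show "\<not> DC_competitive s" by (rule not_competitive_if_eventually_fast[OF speeds c fast])
qed

end
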